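(* Let $\mathsf{S}^2(\mathbb{C}^n)$ be the space of $n\times n$ complex symmetric matrices and $\mu_s\in\mathsf{S}^2(\mathbb{C}^n)^*\otimes(\mathbb{C}^n)^*\otimes\mathbb{C}^n$ the structure tensor of the symmetric matrix-vector product $(A,v)\mapsto Av$. Then $\operatorname{rank}(\mu_s)=n(n+1)/2$.
   Context: Structure tensor of a bilinear map $\beta:U\times V\to W$: the unique $\mu_\beta\in U^*\otimes V^*\otimes W$ with $\beta(u,v)=\mu_\beta(u,v,\cdot)$. Rank: least number of decomposable tensors $u^*\otimes v^*\otimes w$ summing to the tensor. *)

theory Defs
  imports "HOL-Analysis.Analysis"
begin

definition sym_matrices :: "(complex^'n^'n) set" where
  "sym_matrices = {A. transpose A = A}"

text \<open>A complex-linear functional on complex^'n^'m is given by a coefficient array a,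
  acting as u |-> sum_{j,k} a_jk u_jk; on complex^'p by a coefficient vector b.
  (Every linear functional on a subspace U extends to the ambient space, so restricting
  such functionals to U gives exactly the dual space of U.)\<close>
definition mat_functional :: "complex^'n^'m \<Rightarrow> complex^'n^'m \<Rightarrow> complex" where
  "mat_functional a u = (\<Sum>j\<in>UNIV. \<Sum>k\<in>UNIV. a $ j $ k * u $ j $ k)"

definition vec_functional :: "complex^'p \<Rightarrow> complex^'p \<Rightarrow> complex" where
  "vec_functional b v = (\<Sum>l\<in>UNIV. b $ l * v $ l)"

definition tensor_decomp :: "(complex^'n^'m) set \<Rightarrow> (complex^'p) set
    \<Rightarrow> (complex^'n^'m \<Rightarrow> complex^'p \<Rightarrow> complex^'q) \<Rightarrow> nat \<Rightarrow> bool" where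
  "tensor_decomp U V f r \<longleftrightarrow>
     (\<exists>a b w. \<forall>u\<in>U. \<forall>v\<in>V.
        f u v = (\<Sum>i<r. (mat_functional (a i) u * vec_functional (b i) v) *s w i))"

definition tensor_rank :: "(complex^'n^'m) set \<Rightarrow> (complex^'p) set
    \<Rightarrow> (complex^'n^'m \<Rightarrow> complex^'p \<Rightarrow> complex^'q) \<Rightarrow> nat" where
  "tensor_rank U V f = (LEAST r. tensor_decomp U V f r)"

end

theory Submission
  imports Defs
begin

text \<open>
  Upper bound: for symmetric A,
    (Av)_l = (A_ll - \<Sum>_{m\<noteq>l} A_lm) v_l + \<Sum>_{m\<noteq>l} A_lm (v_l + v_m),
  and the term A_lm (v_l + v_m) (e_l + e_m) of an unordered pair {l, m} supplies both coordinates
  l and m at once; this uses one decomposable tensor per unordered pair (including the diagonal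
  pairs {l}), i.e. n(n+1)/2 of them.

  Lower bound: plugging in v = e_m shows that every symmetric A is a combination of the r rank-one
  matrices w_i b_i^T of a decomposition, so r is at least the dimension n(n+1)/2 of S^2(C^n).
  The library's span on complex^'n^'n is the real span, so this is argued with real dimensions:
  2r matrices w_i b_i^T, i w_i b_i^T span the 2 n(n+1)/2 independent matrices E_S, i E_S.
\<close>

definition unordered_pairs :: "'n set set" where
  "unordered_pairs = {S. \<exists>l m. S = {l, m}}"

lemma card_unordered_pairs:
  "card (unordered_pairs :: 'n::finite set set) = CARD('n) * (CARD('n) + 1) div 2"
proof -
  have split: "(unordered_pairs :: 'n set set) = {S. card S = 1} \<union> {S. card S = 2}"
    unfolding unordered_pairs_def by (auto simp: card_1_singleton_iff card_2_iff)
  have "card (unordered_pairs :: 'n set set) = (CARD('n) choose 1) + (CARD('n) choose 2)"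
    unfolding split
    using n_subsets[of "UNIV :: 'n set", simplified]
    by (subst card_Un_disjoint) auto
  also have "\<dots> = CARD('n) * (CARD('n) + 1) div 2"
    by (cases "CARD('n)") (simp_all add: choose_two)
  finally show ?thesis .
qed

lemma sym_matrices_iff: "A \<in> sym_matrices \<longleftrightarrow> (\<forall>i j. A $ i $ j = A $ j $ i)"
  unfolding sym_matrices_def transpose_def vec_eq_iff by auto

definition indicator_vec :: "'n set \<Rightarrow> complex^'n" where
  "indicator_vec S = (\<chi> m. if m \<in> S then 1 else 0)"

lemma vec_functional_indicator_vec:
  "vec_functional (indicator_vec S) v = (\<Sum>l\<in>S. v $ l)"
proof -
  have "(\<lambda>l. indicator_vec S $ l * v $ l) = (\<lambda>l. if l \<in> S then v $ l else 0)"
    by (auto simp: indicator_vec_def)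
  then show ?thesis
    unfolding vec_functional_def
    by (simp only: sum.inter_restrict[symmetric] finite_class.finite_UNIV) simp
qed

lemma vec_functional_axis: "vec_functional b (axis m 1) = b $ m"
  by (simp add: vec_functional_def axis_def if_distrib cong: if_cong)

lemma matrix_vector_mult_axis: "(A *v axis m 1) $ l = (A :: 'a::comm_ring_1^'n^'k) $ l $ m"
  by (simp add: matrix_vector_mult_def axis_def mult.commute if_distrib cong: if_cong)

definition sym_coeff :: "'n set \<Rightarrow> complex^'n^'n" where
  "sym_coeff S = (\<chi> p q. if card S = 2 then (if p \<in> S \<and> q \<in> S \<and> p \<noteq> q then 1/2 else 0)
                        else if p \<in> S then (if q \<in> S then 1 else -1) else 0)"

lemma mat_functional_sym_coeff_pair:
  assumes "A \<in> sym_matrices" and "l \<noteq> m"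
  shows "mat_functional (sym_coeff {l, m}) A = A $ l $ m"
proof -
  have "sym_coeff {l, m} $ p $ q * A $ p $ q
      = (if p = l then (if q = m then A $ l $ m / 2 else 0) else 0)
        + (if p = m then (if q = l then A $ m $ l / 2 else 0) else 0)" for p q
    using \<open>l \<noteq> m\<close> by (simp add: sym_coeff_def)
  then have "mat_functional (sym_coeff {l, m}) A = A $ l $ m / 2 + A $ m $ l / 2"
    unfolding mat_functional_def by (simp only:) (simp add: sum.distrib sum.swap[of _ UNIV UNIV])
  then show ?thesis
    using assms(1) by (simp add: sym_matrices_iff)
qed

lemma mat_functional_sym_coeff_single:
  "mat_functional (sym_coeff {l}) A = A $ l $ l - (\<Sum>q\<in>UNIV - {l}. A $ l $ q)"
proof -
  have "sym_coeff {l} $ p $ q * A $ p $ q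
      = (if p = l then (if q = l then A $ l $ l else - A $ l $ q) else 0)" for p q
    by (simp add: sym_coeff_def)
  then have "mat_functional (sym_coeff {l}) A
      = (\<Sum>q\<in>UNIV. if q = l then A $ l $ l else - A $ l $ q)"
    unfolding mat_functional_def by (simp only:) (subst sum.swap, simp)
  also have "\<dots> = A $ l $ l + (\<Sum>q\<in>UNIV - {l}. - A $ l $ q)"
    by (subst sum.remove[of UNIV l]) auto
  finally show ?thesis
    by (simp add: sum_negf)
qed

lemma sym_matrix_vector_mult_decomposition:
  assumes "A \<in> sym_matrices"
  shows "A *v v = (\<Sum>S\<in>unordered_pairs.
           (mat_functional (sym_coeff S) A * vec_functional (indicator_vec S) v) *s indicator_vec S)"
proof (rule vec_eq_iff[THEN iffD2], rule allI)
  fix l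
  define G where "G S = mat_functional (sym_coeff S) A * vec_functional (indicator_vec S) v" for S
  have pairs: "(\<Sum>m\<in>UNIV - {l}. G {l, m})
      = (\<Sum>m\<in>UNIV - {l}. A $ l $ m * v $ l + A $ l $ m * v $ m)"
    using assms
    by (intro sum.cong refl)
       (auto simp: G_def mat_functional_sym_coeff_pair vec_functional_indicator_vec algebra_simps)
  have single: "G {l} = (A $ l $ l - (\<Sum>m\<in>UNIV - {l}. A $ l $ m)) * v $ l"
    by (simp add: G_def mat_functional_sym_coeff_single vec_functional_indicator_vec)
  have "(\<Sum>S\<in>unordered_pairs. G S *s indicator_vec S) $ l = sum G {S \<in> unordered_pairs. l \<in> S}"
    by (simp add: sum_component indicator_vec_def sum.inter_filter if_distrib cong: if_cong)
  also have "{S \<in> unordered_pairs. l \<in> S} = (\<lambda>m. {l, m}) ` UNIV"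
    unfolding unordered_pairs_def by auto
  also have "sum G ((\<lambda>m. {l, m}) ` UNIV) = G {l} + (\<Sum>m\<in>UNIV - {l}. G {l, m})"
    by (subst sum.reindex) (auto simp: inj_on_def doubleton_eq_iff sum.remove[of UNIV l])
  also have "\<dots> = A $ l $ l * v $ l + (\<Sum>m\<in>UNIV - {l}. A $ l $ m * v $ m)"
    unfolding pairs single by (simp add: sum.distrib sum_distrib_left algebra_simps)
  also have "\<dots> = (A *v v) $ l"
    by (simp add: matrix_vector_mult_def sum.remove[of UNIV l])
  finally show "(A *v v) $ l = (\<Sum>S\<in>unordered_pairs. G S *s indicator_vec S) $ l"
    by simp
qed

lemma tensor_decomp_finite_sum:
  assumes "finite I"
    and "\<And>u v. u \<in> U \<Longrightarrow> v \<in> V \<Longrightarrow>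
           f u v = (\<Sum>i\<in>I. (mat_functional (a i) u * vec_functional (b i) v) *s w i)"
  shows "tensor_decomp U V f (card I)"
proof -
  obtain h where h: "bij_betw h {..<card I} I"
    using ex_bij_betw_nat_finite[OF assms(1)] lessThan_atLeast0 by metis
  have "f u v = (\<Sum>j<card I. (mat_functional (a (h j)) u * vec_functional (b (h j)) v) *s w (h j))"
    if "u \<in> U" "v \<in> V" for u v
    unfolding assms(2)[OF that]
    by (rule sum.reindex_bij_betw[OF h, symmetric,
          where g="\<lambda>i. (mat_functional (a i) u * vec_functional (b i) v) *s w i"])
  then show ?thesis
    unfolding tensor_decomp_def
    by (intro exI[of _ "a \<circ> h"] exI[of _ "b \<circ> h"] exI[of _ "w \<circ> h"]) simp
qed

lemma tensor_decomp_sym_matrix_vector_mult: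
  "tensor_decomp (sym_matrices :: (complex^'n::finite^'n) set) UNIV (\<lambda>A v. A *v v)
     (card (unordered_pairs :: 'n set set))"
  by (rule tensor_decomp_finite_sum[OF _ sym_matrix_vector_mult_decomposition]) simp

lemma tensor_decomp_matrix_vector_mult_imp_span:
  fixes U :: "(complex^'n^'m) set"
  assumes "tensor_decomp U UNIV (\<lambda>A v. A *v v) r"
  obtains S where "finite S" "card S \<le> 2 * r" "U \<subseteq> span S"
proof -
  obtain a b w where decomp: "\<And>A v. A \<in> U \<Longrightarrow>
      A *v v = (\<Sum>i<r. (mat_functional (a i) A * vec_functional (b i) v) *s w i)"
    using assms unfolding tensor_decomp_def by blast
  define M :: "complex \<Rightarrow> nat \<Rightarrow> complex^'n^'m"
    where "M c i = (\<chi> l m. c * (w i $ l * b i $ m))" for c i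
  define S where "S = M 1 ` {..<r} \<union> M \<i> ` {..<r}"
  have "card S \<le> card (M 1 ` {..<r}) + card (M \<i> ` {..<r})"
    unfolding S_def by (rule card_Un_le)
  also have "\<dots> \<le> 2 * r"
    using card_image_le[of "{..<r}" "M 1"] card_image_le[of "{..<r}" "M \<i>"] by simp
  finally have "card S \<le> 2 * r" .
  moreover have "A \<in> span S" if "A \<in> U" for A
  proof -
    define c where "c i = mat_functional (a i) A" for i
    have "A $ l $ m = (\<Sum>i<r. Re (c i) *\<^sub>R M 1 i + Im (c i) *\<^sub>R M \<i> i) $ l $ m" for l m
    proof -
      have re_im: "Re z *\<^sub>R x + Im z *\<^sub>R (\<i> * x) = z * x" for z x :: complex
        by (simp add: complex_eq_iff)
      have "A $ l $ m = (\<Sum>i<r. c i * (w i $ l * b i $ m))"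
        using decomp[OF that, of "axis m 1"]
        by (simp add: matrix_vector_mult_axis[symmetric] sum_component vec_functional_axis c_def
                      mult.commute mult.left_commute)
      then show ?thesis
        by (simp add: sum_component M_def re_im)
    qed
    then have "A = (\<Sum>i<r. Re (c i) *\<^sub>R M 1 i + Im (c i) *\<^sub>R M \<i> i)"
      by (simp add: vec_eq_iff)
    also have "\<dots> \<in> span S"
      by (intro span_sum span_add span_scale span_base) (auto simp: S_def)
    finally show ?thesis .
  qed
  ultimately show ?thesis
    using that[of S] by (auto simp: S_def)
qed

definition sym_unit :: "'n set \<Rightarrow> complex \<Rightarrow> complex^'n^'n" where
  "sym_unit S c = (\<chi> p q. if {p, q} = S then c else 0)"

lemma sym_unit_in_sym_matrices: "sym_unit S c \<in> sym_matrices"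
  unfolding sym_matrices_iff sym_unit_def by (simp add: insert_commute)

lemma inj_on_sym_unit:
  "inj_on (\<lambda>(S, c). sym_unit S c) ((unordered_pairs :: 'n::finite set set) \<times> {1, \<i>})"
proof (rule inj_onI, clarify)
  fix S S' :: "'n set" and c c' :: complex
  assume "S \<in> unordered_pairs" "c \<in> {1, \<i>}" and eq: "sym_unit S c = sym_unit S' c'"
  then obtain l m where S: "S = {l, m}"
    unfolding unordered_pairs_def by auto
  have "sym_unit S c $ l $ m = sym_unit S' c' $ l $ m"
    using eq by simp
  then have "c = (if S = S' then c' else 0)"
    unfolding sym_unit_def S by simp
  then show "S = S' \<and> c = c'"
    using \<open>c \<in> {1, \<i>}\<close> by (auto split: if_splits)
qed

lemma independent_sym_units:
  "independent ((\<lambda>(S, c). sym_unit S c) ` ((unordered_pairs :: 'n::finite set set) \<times> {1, \<i>}))"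
  (is "independent ?T")
proof
  assume "dependent ?T"
  moreover have "finite ?T"
    by simp
  ultimately obtain u where u: "\<exists>A\<in>?T. u A \<noteq> 0" "(\<Sum>A\<in>?T. u A *\<^sub>R A) = 0"
    using dependent_finite by blast
  from u(1) obtain S c where Sc: "S \<in> unordered_pairs" "c \<in> {1, \<i>}" "u (sym_unit S c) \<noteq> 0"
    by auto
  then obtain l m where S: "S = {l, m}"
    unfolding unordered_pairs_def by auto
  have entry: "sym_unit S' c' $ l $ m = (if S' = S then c' else 0)" for S' c'
    unfolding sym_unit_def S by auto
  let ?x = "\<lambda>c. complex_of_real (u (sym_unit S c))"
  have "0 = (\<Sum>A\<in>?T. u A *\<^sub>R A) $ l $ m"
    using u(2) by simp
  also have "\<dots> = (\<Sum>(S', c')\<in>unordered_pairs \<times> {1, \<i>}.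
                       u (sym_unit S' c') *\<^sub>R sym_unit S' c' $ l $ m)"
    by (subst sum.reindex[OF inj_on_sym_unit]) (simp add: case_prod_unfold)
  also have "\<dots> = (\<Sum>S'\<in>unordered_pairs. if S' = S then ?x 1 + ?x \<i> * \<i> else 0)"
    unfolding sum.cartesian_product[symmetric] entry
    by (intro sum.cong refl) (simp add: scaleR_conv_of_real)
  also have "\<dots> = ?x 1 + ?x \<i> * \<i>"
    using Sc(1) by simp
  finally have "u (sym_unit S 1) = 0" "u (sym_unit S \<i>) = 0"
    by (simp_all add: complex_eq_iff)
  then show False
    using Sc(2,3) by auto
qed

lemma tensor_decomp_sym_matrix_vector_mult_lower_bound:
  assumes "tensor_decomp (sym_matrices :: (complex^'n::finite^'n) set) UNIV (\<lambda>A v. A *v v) r"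
  shows "card (unordered_pairs :: 'n set set) \<le> r"
proof -
  obtain S where S: "finite S" "card S \<le> 2 * r" "(sym_matrices :: (complex^'n^'n) set) \<subseteq> span S"
    using tensor_decomp_matrix_vector_mult_imp_span[OF assms] by blast
  let ?T = "(\<lambda>(S, c). sym_unit S c) ` ((unordered_pairs :: 'n set set) \<times> {1, \<i>})"
  have "?T \<subseteq> span S"
    using S(3) sym_unit_in_sym_matrices by auto
  then have "card ?T \<le> card S"
    using independent_span_bound[OF S(1) independent_sym_units] by simp
  moreover have "card ?T = 2 * card (unordered_pairs :: 'n set set)"
    by (simp add: card_image[OF inj_on_sym_unit] card_cartesian_product)
  ultimately show ?thesis
    using S(2) by simp
qed

theorem mainTheorem15:
  shows "tensor_rank (sym_matrices :: (complex^'n^'n) set) (UNIV :: (complex^'n) set)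
           (\<lambda>A v. A *v v) = CARD('n) * (CARD('n) + 1) div 2"
  unfolding tensor_rank_def card_unordered_pairs[symmetric]
  by (rule Least_equality)
     (fact tensor_decomp_sym_matrix_vector_mult, fact tensor_decomp_sym_matrix_vector_mult_lower_bound)

end
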